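(* Let $\alpha,\beta\in\Bbbk^n$ and $\mathcal H=\mathcal H(\alpha,\beta,0)$, graded by path length. Then the total Hilbert series of $\mathcal H$ is $h^{\mathrm{tot}}_{\mathcal H}(t)=n(1-t)^{-2}(1-t^2)^{-1}$.
   Context: $\Bbbk$ is an algebraically closed field of characteristic zero. Fix $n\ge1$; indices are taken modulo $n$ and $Q_0=\{0,\dots,n-1\}$. Let $Q$ be the quiver with vertex set $Q_0$ and arrows $u_i:i\to i+1$ and $d_i:i+1\to i$ for each $i\in Q_0$. Paths are written left to right (target of each arrow equals source of the next), $e_i$ is the trivial path at $i$. For $\alpha,\beta\in\Bbbk^n$, $\mathcal H(\alpha,\beta,0)$ is $\Bbbk Q$ modulo the relations $d_{i-1}u_{i-1}u_i=\alpha_iu_id_iu_i+\beta_iu_iu_{i+1}d_{i+1}$ and $d_id_{i-1}u_{i-1}=\alpha_id_iu_id_i+\beta_iu_{i+1}d_{i+1}d_i$ for all $i\in Q_0$. It is $\mathbb N$-graded with $\deg u_i=\deg d_i=1$, $\deg e_i=0$. For a graded quotient $A=\Bbbk Q/I$, let $H_k\in M_n(\mathbb N)$ have $(i,j)$ entry $\dim_\Bbbk e_iA_ke_j$; the total Hilbert series $h_A^{\mathrm{tot}}(t)$ is the series whose coefficient of $t^k$ is the sum of the entries of $H_k$. *)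

theory Defs
  imports Main "HOL-Library.Function_Algebras" "HOL-Computational_Algebra.Polynomial"
    "HOL-Computational_Algebra.Formal_Power_Series"
begin

text \<open>Arrows of the double cyclic quiver with n vertices: U i = u_i : i -> i+1,
  D i = d_i : i+1 -> i (indices mod n).\<close>
datatype arr = U nat | D nat

definition src :: "nat \<Rightarrow> arr \<Rightarrow> nat" where
  "src n a = (case a of U i \<Rightarrow> i mod n | D i \<Rightarrow> (i + 1) mod n)"

definition tgt :: "nat \<Rightarrow> arr \<Rightarrow> nat" where
  "tgt n a = (case a of U i \<Rightarrow> (i + 1) mod n | D i \<Rightarrow> i mod n)"

definition arr_ok :: "nat \<Rightarrow> arr \<Rightarrow> bool" where
  "arr_ok n a = (case a of U i \<Rightarrow> i < n | D i \<Rightarrow> i < n)"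

text \<open>A path is a start vertex together with a list of arrows (written left to right,
  the target of each arrow is the source of the next). The trivial path e_v is (v, []).\<close>
fun walk :: "nat \<Rightarrow> nat \<Rightarrow> arr list \<Rightarrow> nat option" where
  "walk n v [] = Some v"
| "walk n v (a # as) = (if arr_ok n a \<and> src n a = v then walk n (tgt n a) as else None)"

definition is_path :: "nat \<Rightarrow> nat \<Rightarrow> arr list \<Rightarrow> nat \<Rightarrow> bool" where
  "is_path n i p j \<longleftrightarrow> i < n \<and> walk n i p = Some j"

text \<open>Elements of the path algebra kQ: functions on paths (coefficients); paths are the
  indicator functions.\<close>
type_synonym 'k kQ = "nat \<times> arr list \<Rightarrow> 'k"

definition pvec :: "nat \<times> arr list \<Rightarrow> 'k::field kQ" where
  "pvec w = (\<lambda>w'. if w' = w then 1 else 0)"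

definition scaleQ :: "'k::field \<Rightarrow> 'k kQ \<Rightarrow> 'k kQ" where
  "scaleQ c f = (\<lambda>w. c * f w)"

definition dimQ :: "'k::field kQ set \<Rightarrow> nat" where
  "dimQ S = vector_space.dim (scaleQ :: 'k \<Rightarrow> 'k kQ \<Rightarrow> 'k kQ) S"

text \<open>A homogeneous relation: start vertex, end vertex, and a list of
  (coefficient, path) terms, all paths going from the start to the end vertex.\<close>
type_synonym 'k rel = "nat \<times> nat \<times> ('k \<times> arr list) list"

definition pm :: "nat \<Rightarrow> nat \<Rightarrow> nat" where
  "pm n i = (i + n - 1) mod n"

definition ps :: "nat \<Rightarrow> nat \<Rightarrow> nat" where
  "ps n i = (i + 1) mod n"

definition relA :: "nat \<Rightarrow> (nat \<Rightarrow> 'k::field) \<Rightarrow> (nat \<Rightarrow> 'k) \<Rightarrow> nat \<Rightarrow> 'k rel" where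
  "relA n \<alpha> \<beta> i = (i, ps n i,
     [(1, [D (pm n i), U (pm n i), U i]),
      (- \<alpha> i, [U i, D i, U i]),
      (- \<beta> i, [U i, U (ps n i), D (ps n i)])])"

definition relB :: "nat \<Rightarrow> (nat \<Rightarrow> 'k::field) \<Rightarrow> (nat \<Rightarrow> 'k) \<Rightarrow> nat \<Rightarrow> 'k rel" where
  "relB n \<alpha> \<beta> i = (ps n i, i,
     [(1, [D i, D (pm n i), U (pm n i)]),
      (- \<alpha> i, [D i, U i, D i]),
      (- \<beta> i, [U (ps n i), D (ps n i), D i])])"

definition rels :: "nat \<Rightarrow> (nat \<Rightarrow> 'k::field) \<Rightarrow> (nat \<Rightarrow> 'k) \<Rightarrow> 'k rel set" where
  "rels n \<alpha> \<beta> = {relA n \<alpha> \<beta> i | i. i < n} \<union> {relB n \<alpha> \<beta> i | i. i < n}"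

text \<open>The product p * r * q of paths p = (i, ps) and q with a relation r, as an element of kQ
  (assuming composability).\<close>
definition sandwich :: "nat \<Rightarrow> arr list \<Rightarrow> ('k::field \<times> arr list) list \<Rightarrow> arr list \<Rightarrow> 'k kQ" where
  "sandwich i p ts q = (\<lambda>(v, w). if v = i then
      sum_list (map (\<lambda>(c, t). if w = p @ t @ q then c else 0) ts) else 0)"

definition paths_deg :: "nat \<Rightarrow> nat \<Rightarrow> nat \<Rightarrow> nat \<Rightarrow> 'k::field kQ set" where
  "paths_deg n k i j = {pvec (i, p) | p. is_path n i p j \<and> length p = k}"

text \<open>e_i I_k e_j for the two-sided ideal I generated by the (homogeneous) relations:
  spanned by the elements p r q with p, q paths, i -p-> a, r : a -> b, b -q-> j,
  of total length k.\<close>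
definition ideal_deg :: "nat \<Rightarrow> 'k::field rel set \<Rightarrow> nat \<Rightarrow> nat \<Rightarrow> nat \<Rightarrow> 'k kQ set" where
  "ideal_deg n R k i j = {sandwich i p ts q | p q a b ts.
      (a, b, ts) \<in> R \<and> is_path n i p a \<and> is_path n b q j \<and>
      length p + length (snd (hd ts)) + length q = k}"

text \<open>(i,j) entry of H_k: dim_k e_i A_k e_j = dim e_i (kQ)_k e_j - dim e_i I_k e_j.\<close>
definition hilb_entry :: "nat \<Rightarrow> 'k::field rel set \<Rightarrow> nat \<Rightarrow> nat \<Rightarrow> nat \<Rightarrow> nat" where
  "hilb_entry n R k i j =
     dimQ (paths_deg n k i j :: 'k kQ set) - dimQ (ideal_deg n R k i j)"

definition hilb_tot :: "nat \<Rightarrow> 'k::field rel set \<Rightarrow> rat fps" where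
  "hilb_tot n R = Abs_fps (\<lambda>k. of_nat (\<Sum>i<n. \<Sum>j<n. hilb_entry n R k i j))"

definition alg_closed :: "'k::field itself \<Rightarrow> bool" where
  "alg_closed _ \<longleftrightarrow> (\<forall>p :: 'k poly. degree p > 0 \<longrightarrow> (\<exists>x. poly p x = 0))"

end

(* Reading relation A as  d u u -> alpha u d u + beta u u d  and relation B as
   d d u -> alpha d u d + beta u d d,  every path from a vertex is congruent modulo the relations
   to a combination of the normal words u^a (du)^b d^c with the same numbers of u's and d's.
   The coefficients of this normal form are given by an explicit recursion built from the action
   of a single arrow d on a normal word.  That this action satisfies both relations again shows
   that the normal-form map kills the ideal, so the differences "path minus normal form" of the
   non-normal paths form a basis of each graded piece e_i I_k e_j.  Hence dim e_i H_k e_j counts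
   the normal words of length k from i to j; summed over j this is  sum_{b <= k/2} (k - 2b + 1),
   whose generating function is 1/((1-t)^2 (1-t^2)).  Neither alpha, beta nor the field matter. *)

theory Submission
  imports Defs
begin

section \<open>The path algebra as a vector space\<close>

interpretation kQ: vector_space "scaleQ :: 'k::field \<Rightarrow> 'k kQ \<Rightarrow> 'k kQ"
  by unfold_locales (auto simp: scaleQ_def fun_eq_iff algebra_simps)

lemma dimQ_eq_dim: "dimQ = kQ.dim"
  by (simp add: dimQ_def fun_eq_iff)

lemma scaleQ_apply: "scaleQ c f w = c * f w"
  by (simp add: scaleQ_def)

lemma sum_apply: "sum f A x = (\<Sum>i\<in>A. f i x)"
  by (induction A rule: infinite_finite_induct) auto

lemma sum_list_scaleQ_diff:
  "(\<Sum>(c, t)\<leftarrow>ts. scaleQ c (f t - g t)) = (\<Sum>(c, t)\<leftarrow>ts. scaleQ c (f t)) - (\<Sum>(c, t)\<leftarrow>ts. scaleQ c (g t))"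
  by (induction ts) (auto simp: kQ.scale_right_diff_distrib simp del: minus_apply plus_fun_apply)

lemma sum_list_scaleQ_in_span:
  "(\<And>c t. (c, t) \<in> set ts \<Longrightarrow> f t \<in> kQ.span S) \<Longrightarrow> (\<Sum>(c, t)\<leftarrow>ts. scaleQ c (f t)) \<in> kQ.span S"
  by (induction ts) (auto simp: kQ.span_zero intro!: kQ.span_add kQ.span_scale simp del: plus_fun_apply)

lemma kQ_independent_diagonal:
  assumes "\<And>f. f \<in> S \<Longrightarrow> \<exists>z. f z \<noteq> 0 \<and> (\<forall>g\<in>S. g \<noteq> f \<longrightarrow> g z = 0)"
  shows "kQ.independent (S :: 'k::field kQ set)"
  unfolding kQ.dependent_def
proof clarify
  fix f
  assume f: "f \<in> S" "f \<in> kQ.span (S - {f})"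
  obtain z where z: "f z \<noteq> 0" "\<forall>g\<in>S. g \<noteq> f \<longrightarrow> g z = 0"
    using assms f(1) by blast
  have "h z = 0" if "h \<in> kQ.span (S - {f})" for h
    using that by (induction rule: kQ.span_induct_alt) (use z in \<open>auto simp: scaleQ_apply\<close>)
  then show False
    using f(2) z(1) by blast
qed

lemma dim_paths_deg: "dimQ (paths_deg n k i j :: 'k::field kQ set) = card {w. is_path n i w j \<and> length w = k}"
proof -
  let ?P = "{w. is_path n i w j \<and> length w = k}"
  have paths: "paths_deg n k i j = (\<lambda>w. pvec (i, w)) ` ?P"
    by (auto simp: paths_deg_def)
  have "kQ.independent ((\<lambda>w. pvec (i, w) :: 'k kQ) ` ?P)"
    by (rule kQ_independent_diagonal) (auto simp: pvec_def intro!: exI[of _ "(i, _)"])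
  moreover have "inj_on (\<lambda>w. pvec (i, w) :: 'k kQ) ?P"
    by (rule inj_onI) (metis (mono_tags) pvec_def fun_upd_same one_neq_zero prod.inject)
  ultimately show ?thesis
    by (simp add: dimQ_eq_dim paths kQ.dim_eq_card_independent card_image)
qed

section \<open>Vertices and walks\<close>

lemma ps_less: "n \<ge> 1 \<Longrightarrow> ps n x < n"
  by (simp add: ps_def)

lemma pm_less: "n \<ge> 1 \<Longrightarrow> pm n x < n"
  by (simp add: pm_def)

lemma ps_pm [simp]: "x < n \<Longrightarrow> ps n (pm n x) = x"
  by (cases x) (simp_all add: pm_def ps_def mod_Suc_eq)

lemma pm_ps [simp]: "x < n \<Longrightarrow> pm n (ps n x) = x"
  by (cases "Suc x = n") (simp_all add: pm_def ps_def)

lemma walk_Cons_U: "walk n x (U i # w) = (if i < n \<and> x = i then walk n (ps n i) w else None)"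
  by (auto simp: arr_ok_def src_def tgt_def ps_def)

lemma walk_Cons_D: "walk n x (D i # w) = (if i < n \<and> x = ps n i then walk n i w else None)"
  by (auto simp: arr_ok_def src_def tgt_def ps_def)

lemma src_U [simp]: "x < n \<Longrightarrow> src n (U x) = x"
  and tgt_U [simp]: "tgt n (U x) = ps n x"
  and src_D [simp]: "src n (D y) = ps n y"
  and tgt_D [simp]: "y < n \<Longrightarrow> tgt n (D y) = y"
  and arr_ok_U [simp]: "arr_ok n (U x) \<longleftrightarrow> x < n"
  and arr_ok_D [simp]: "arr_ok n (D y) \<longleftrightarrow> y < n"
  by (simp_all add: src_def tgt_def ps_def arr_ok_def)

declare walk.simps(2) [simp del]
declare walk_Cons_U [simp] walk_Cons_D [simp]

lemma walk_append: "walk n x (u @ v) = (case walk n x u of None \<Rightarrow> None | Some y \<Rightarrow> walk n y v)"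
  by (induction u arbitrary: x) (auto simp: walk.simps(2))

lemma walk_less: "x < n \<Longrightarrow> walk n x w = Some y \<Longrightarrow> y < n"
proof (induction w arbitrary: x)
  case (Cons a w)
  then show ?case
    using ps_less[of n] by (cases a) (auto split: if_splits)
qed simp

lemma finite_paths: "finite {w. is_path n i w j \<and> length w = k}"
proof -
  have arrows: "{a. arr_ok n a} \<subseteq> U ` {..<n} \<union> D ` {..<n}"
  proof
    fix a :: arr
    assume "a \<in> {a. arr_ok n a}"
    then show "a \<in> U ` {..<n} \<union> D ` {..<n}"
      by (cases a) (auto simp: arr_ok_def)
  qed
  have "set w \<subseteq> {a. arr_ok n a}" if "walk n i w \<noteq> None" for w
    using that by (induction w arbitrary: i) (auto simp: walk.simps(2) split: if_splits)
  then have "{w. is_path n i w j \<and> length w = k} \<subseteq> {w. set w \<subseteq> {a. arr_ok n a} \<and> length w = k}"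
    by (auto simp: is_path_def)
  moreover have "finite {a. arr_ok n a}"
    using arrows by (rule finite_subset) auto
  ultimately show ?thesis
    using finite_lists_length_eq finite_subset by blast
qed

section \<open>Normal words\<close>

fun normal_word :: "nat \<Rightarrow> nat \<Rightarrow> nat \<Rightarrow> nat \<Rightarrow> nat \<Rightarrow> arr list" where
  "normal_word n x (Suc a) b c = U x # normal_word n (ps n x) a b c"
| "normal_word n x 0 (Suc b) c = D (pm n x) # U (pm n x) # normal_word n x 0 b c"
| "normal_word n x 0 0 (Suc c) = D (pm n x) # normal_word n (pm n x) 0 0 c"
| "normal_word n x 0 0 0 = []"

definition normal_words :: "nat \<Rightarrow> nat \<Rightarrow> arr list set" where
  "normal_words n x = {w. \<exists>a b c. w = normal_word n x a b c}"

definition is_U :: "arr \<Rightarrow> bool" where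
  "is_U a = (case a of U _ \<Rightarrow> True | D _ \<Rightarrow> False)"

definition count_U :: "arr list \<Rightarrow> nat" where
  "count_U w = length (filter is_U w)"

definition count_D :: "arr list \<Rightarrow> nat" where
  "count_D w = length (filter (Not \<circ> is_U) w)"

lemma count_U_simps [simp]:
  "count_U [] = 0" "count_U (U i # w) = Suc (count_U w)" "count_U (D i # w) = count_U w"
  "count_U (v @ w) = count_U v + count_U w"
  by (auto simp: count_U_def is_U_def)

lemma count_D_simps [simp]:
  "count_D [] = 0" "count_D (U i # w) = count_D w" "count_D (D i # w) = Suc (count_D w)"
  "count_D (v @ w) = count_D v + count_D w"
  by (auto simp: count_D_def is_U_def)

lemma length_eq_count_U_D: "length w = count_U w + count_D w"
  by (induction w) (auto simp: count_U_def count_D_def)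

lemma normal_word_counts:
  "count_U (normal_word n x a b c) = a + b"
  "count_D (normal_word n x a b c) = b + c"
  "length (normal_word n x a b c) = a + 2 * b + c"
  by (induction n x a b c rule: normal_word.induct) auto

lemma normal_word_inject:
  assumes "normal_word n x a b c = normal_word n x a' b' c'"
  shows "a = a' \<and> b = b' \<and> c = c'"
proof -
  have "length (takeWhile is_U (normal_word n x a b c)) = a" for a b c
    by (induction n x a b c rule: normal_word.induct) (auto simp: is_U_def)
  then have "a = a'"
    using assms by metis
  then show ?thesis
    using assms normal_word_counts(1,2) by (metis add_left_imp_eq add_right_imp_eq)
qed

lemma walk_normal_word:
  assumes "n \<ge> 1" "x < n"
  shows "\<exists>j. walk n x (normal_word n x a b c) = Some j"
  using assms(2)
  by (induction n x a b c rule: normal_word.induct)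
    (simp_all add: ps_less pm_less assms(1))

definition num_normal_words :: "nat \<Rightarrow> nat" where
  "num_normal_words k = (\<Sum>b\<le>k div 2. k - 2 * b + 1)"

lemma num_normal_words_add_2: "num_normal_words (k + 2) = num_normal_words k + (k + 3)"
proof -
  have "num_normal_words (k + 2) = (\<Sum>b\<le>Suc (k div 2). k + 2 - 2 * b + 1)"
    by (simp add: num_normal_words_def)
  also have "\<dots> = (k + 3) + (\<Sum>b\<le>k div 2. k + 2 - 2 * Suc b + 1)"
    by (subst sum.atMost_Suc_shift) simp
  finally show ?thesis
    by (simp add: num_normal_words_def)
qed

lemma card_normal_paths:
  assumes "n \<ge> 1" "i < n"
  shows "(\<Sum>j<n. card ({w. is_path n i w j \<and> length w = k} \<inter> normal_words n i))
    = num_normal_words k"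
proof -
  define P where "P j = {w. is_path n i w j \<and> length w = k} \<inter> normal_words n i" for j
  define T where "T = (SIGMA b:{..k div 2}. {..k - 2 * b})"
  define f where "f = (\<lambda>(b, a). normal_word n i a b (k - 2 * b - a))"
  have "(\<Sum>j<n. card (P j)) = card (\<Union>j<n. P j)"
    by (rule card_UN_disjoint[symmetric]) (auto simp: P_def finite_paths, auto simp: is_path_def)
  also have "(\<Union>j<n. P j) = {w \<in> normal_words n i. length w = k}"
    using walk_normal_word[OF assms] walk_less[OF assms(2)]
    by (fastforce simp: P_def is_path_def normal_words_def assms(2))
  also have "\<dots> = f ` T"
  proof
    show "{w \<in> normal_words n i. length w = k} \<subseteq> f ` T"
    proof
      fix w
      assume "w \<in> {w \<in> normal_words n i. length w = k}"
      then obtain a b c where "w = normal_word n i a b c" "a + 2 * b + c = k"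
        by (auto simp: normal_words_def normal_word_counts)
      then have "(b, a) \<in> T" "w = f (b, a)"
        by (auto simp: f_def T_def)
      then show "w \<in> f ` T"
        by blast
    qed
  qed (auto simp: f_def T_def normal_words_def normal_word_counts)
  also have "card (f ` T) = card T"
    by (rule card_image) (auto simp: inj_on_def f_def T_def dest: normal_word_inject)
  also have "card T = num_normal_words k"
    by (simp add: T_def num_normal_words_def card_SigmaI)
  finally show ?thesis
    by (simp add: P_def)
qed

lemma fps_num_normal_words:
  "inverse ((1 - fps_X) ^ 2 * (1 - fps_X ^ 2) :: 'a::field fps)
    = Abs_fps (\<lambda>k. of_nat (num_normal_words k))"
proof (rule fps_inverse_unique)
  let ?F = "Abs_fps (\<lambda>k. of_nat (num_normal_words k)) :: 'a fps"
  have "(1 - fps_X ^ 2) * ?F = Abs_fps (\<lambda>k. of_nat (k + 1))"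
  proof (rule fps_ext)
    fix k
    have "fps_nth ((1 - fps_X ^ 2) * ?F) k
        = of_nat (num_normal_words k) - (if k < 2 then 0 else of_nat (num_normal_words (k - 2)))"
      unfolding left_diff_distrib by (simp add: fps_X_power_mult_nth)
    also have "\<dots> = of_nat (k + 1)"
    proof -
      consider "k = 0" | "k = 1" | m where "k = m + 2"
        by (metis One_nat_def add_2_eq_Suc' not0_implies_Suc)
      then show ?thesis
      proof cases
        case 3
        then show ?thesis
          using num_normal_words_add_2[of m] by simp
      qed (simp_all add: num_normal_words_def)
    qed
    finally show "fps_nth ((1 - fps_X ^ 2) * ?F) k = fps_nth (Abs_fps (\<lambda>k. of_nat (k + 1))) k"
      by simp
  qed
  moreover have "(1 - fps_X) * Abs_fps (\<lambda>k. of_nat (k + 1)) = (Abs_fps (\<lambda>_. 1) :: 'a fps)"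
    unfolding left_diff_distrib by (rule fps_ext) simp
  moreover have "(1 - fps_X) * Abs_fps (\<lambda>_. 1) = (1 :: 'a fps)"
    unfolding left_diff_distrib by (rule fps_ext) simp
  ultimately show "(1 - fps_X) ^ 2 * (1 - fps_X ^ 2) * ?F = 1"
    by (simp add: power2_eq_square mult.assoc)
qed

section \<open>Normal-form coefficients\<close>

definition unit_coeffs :: "nat \<Rightarrow> nat \<Rightarrow> 'a::{zero, one}" where
  "unit_coeffs b = (\<lambda>c. if c = b then 1 else 0)"

lemma le_gap_cases:
  assumes "(b::nat) \<le> p"
  obtains "p = 0" | "p = Suc b" | a where "p = a + b + 2" | m where "p = Suc m" "b = Suc m"
proof -
  consider "b = p" | "p = Suc b" | "Suc b < p"
    using assms by linarith
  then show thesis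
  proof cases
    case 1
    then show thesis
      using that(1,4) by (cases p) auto
  next
    case 3
    then show thesis
      using that(3)[of "p - b - 2"] by simp
  qed (rule that(2))
qed

locale H_relations =
  fixes n :: nat and \<alpha> \<beta> :: "nat \<Rightarrow> 'k::field"
  assumes n_ge_1: "n \<ge> 1"
begin

lemma ps_bound [simp]: "ps n x < n" and pm_bound [simp]: "pm n x < n"
  using n_ge_1 by (simp_all add: ps_less pm_less)

(* d_coeffs x p q b b' is the coefficient of u^(p-b') (du)^b' d^(q+1-b') in the normal form of
   d_x u^(p-b) (du)^b d^(q-b): a leading d d u is rewritten by relation B, a leading d u u by
   relation A.  Out-of-range indices give 0. *)
function d_coeffs :: "nat \<Rightarrow> nat \<Rightarrow> nat \<Rightarrow> nat \<Rightarrow> nat \<Rightarrow> 'k" where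
  "d_coeffs x p q b b' =
    (if p < b \<or> q < b then 0
     else if p = b then
       (if b = 0 then unit_coeffs 0 b'
        else \<alpha> x * (\<Sum>c<p. d_coeffs x (p - 1) (q - 1) (b - 1) c * d_coeffs x p q c b')
          + \<beta> x * (\<Sum>c\<le>min (p - 1) q.
                 d_coeffs x (p - 1) (q - 1) (b - 1) c * d_coeffs (ps n x) (p - 1) q c b'))
     else if p = Suc b then unit_coeffs (Suc b) b'
     else \<alpha> (ps n x) * d_coeffs (ps n x) (p - 1) q b b'
       + \<beta> (ps n x) * d_coeffs (ps n (ps n x)) (p - 2) q b b')"
  by pat_completeness auto
termination
  by (relation "measure (\<lambda>(x, p, q, b, b'). p + b)") auto

declare d_coeffs.simps [simp del]

definition d_action :: "nat \<Rightarrow> nat \<Rightarrow> nat \<Rightarrow> (nat \<Rightarrow> 'k) \<Rightarrow> nat \<Rightarrow> 'k" where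
  "d_action x p q g = (\<lambda>b'. \<Sum>c\<le>min p q. g c * d_coeffs x p q c b')"

(* nf_coeffs x w b is the coefficient of u^(p-b) (du)^b d^(q-b) in the normal form of the path w
   from x, where p and q are the numbers of u's and d's in w. *)
fun nf_coeffs :: "nat \<Rightarrow> arr list \<Rightarrow> nat \<Rightarrow> 'k" where
  "nf_coeffs x [] = unit_coeffs 0"
| "nf_coeffs x (U i # w) = nf_coeffs (ps n x) w"
| "nf_coeffs x (D i # w) = d_action (pm n x) (count_U w) (count_D w) (nf_coeffs (pm n x) w)"

lemma d_coeffs_eq_0: "min p (Suc q) < b' \<Longrightarrow> d_coeffs x p q b b' = 0"
proof (induction x p q b b' rule: d_coeffs.induct)
  case (1 x p q b b')
  then show ?case
    by (subst d_coeffs.simps) (auto simp: unit_coeffs_def intro!: sum.neutral)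
qed

lemma d_coeffs_le: "d_coeffs x p q b c \<noteq> 0 \<Longrightarrow> c \<le> min p (Suc q)"
  using d_coeffs_eq_0 by (meson not_le)

lemma d_coeffs_d: "d_coeffs x 0 q 0 = unit_coeffs 0"
  by (simp add: fun_eq_iff d_coeffs.simps[of x 0 q 0])

lemma d_coeffs_du: "b \<le> q \<Longrightarrow> d_coeffs x (Suc b) q b = unit_coeffs (Suc b)"
  by (simp add: fun_eq_iff d_coeffs.simps[of x "Suc b" q b])

lemma d_coeffs_duu: "Suc b < p \<Longrightarrow> b \<le> q \<Longrightarrow> d_coeffs x p q b b' =
    \<alpha> (ps n x) * d_coeffs (ps n x) (p - 1) q b b' + \<beta> (ps n x) * d_coeffs (ps n (ps n x)) (p - 2) q b b'"
  by (simp add: d_coeffs.simps[of x p q b b'])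

lemma d_coeffs_ddu: "0 < b \<Longrightarrow> b \<le> q \<Longrightarrow> d_coeffs x b q b b' =
    \<alpha> x * (\<Sum>c<b. d_coeffs x (b - 1) (q - 1) (b - 1) c * d_coeffs x b q c b')
    + \<beta> x * (\<Sum>c\<le>min (b - 1) q. d_coeffs x (b - 1) (q - 1) (b - 1) c * d_coeffs (ps n x) (b - 1) q c b')"
  by (simp add: d_coeffs.simps[of x b q b b'])

lemma d_action_eq_0: "min p (Suc q) < b' \<Longrightarrow> d_action x p q g b' = 0"
  by (simp add: d_action_def d_coeffs_eq_0)

lemma d_action_le: "d_action x p q g c \<noteq> 0 \<Longrightarrow> c \<le> min p (Suc q)"
  using d_action_eq_0 by (meson not_le)

lemma nf_coeffs_eq_0: "min (count_U w) (count_D w) < b' \<Longrightarrow> nf_coeffs x w b' = 0"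
  by (induction x w arbitrary: b' rule: nf_coeffs.induct) (auto simp: d_action_eq_0 unit_coeffs_def)

lemma nf_coeffs_le: "nf_coeffs x w c \<noteq> 0 \<Longrightarrow> c \<le> min (count_U w) (count_D w)"
  using nf_coeffs_eq_0 by (meson not_le)

lemma d_action_eq_sum_le:
  assumes "\<And>c. g c \<noteq> 0 \<Longrightarrow> c \<le> m" "m \<le> min p q"
  shows "d_action x p q g b' = (\<Sum>c\<le>m. g c * d_coeffs x p q c b')"
  unfolding d_action_def by (rule sum.mono_neutral_right) (use assms in auto)

lemma d_action_unit: "b \<le> min p q \<Longrightarrow> d_action x p q (unit_coeffs b) = d_coeffs x p q b"
proof
  fix b'
  assume "b \<le> min p q"
  then show "d_action x p q (unit_coeffs b) b' = d_coeffs x p q b b'"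
    unfolding d_action_def unit_coeffs_def
    by (simp add: if_distrib[of "\<lambda>a. a * _"] sum.delta cong: if_cong)
qed

lemma d_action_linear:
  "d_action x p q (\<lambda>c. a * g c + a' * h c) b' = a * d_action x p q g b' + a' * d_action x p q h b'"
  unfolding d_action_def by (simp add: sum_distrib_left distrib_right sum.distrib mult.assoc)

lemma d_action_sum:
  "finite S \<Longrightarrow> d_action x p q (\<lambda>c'. \<Sum>c\<in>S. f c * h c c') b' = (\<Sum>c\<in>S. f c * d_action x p q (h c) b')"
  unfolding d_action_def
  by (simp add: sum_distrib_left sum_distrib_right sum.swap[of _ S] mult.assoc)

lemma d_action_sum_list:
  "d_action x p q (\<lambda>c. \<Sum>(a, t)\<leftarrow>ts. a * g t c) b' = (\<Sum>(a, t)\<leftarrow>ts. a * d_action x p q (g t) b')"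
  by (induction ts)
    (auto simp: d_action_def distrib_right sum.distrib sum_distrib_left mult.assoc)

lemma d_coeffs_ddu_action:
  assumes "m \<le> r"
  shows "d_coeffs y (Suc m) (Suc r) (Suc m) = (\<lambda>c. \<alpha> y * d_action y (Suc m) (Suc r) (d_coeffs y m r m) c
    + \<beta> y * d_action (ps n y) m (Suc r) (d_coeffs y m r m) c)"
proof
  fix c
  have "d_action y (Suc m) (Suc r) (d_coeffs y m r m) c = (\<Sum>c'<Suc m. d_coeffs y m r m c' * d_coeffs y (Suc m) (Suc r) c' c)"
    using d_action_eq_sum_le[of "d_coeffs y m r m" m] d_coeffs_le assms by (fastforce simp: lessThan_Suc_atMost)
  then show "d_coeffs y (Suc m) (Suc r) (Suc m) c = \<alpha> y * d_action y (Suc m) (Suc r) (d_coeffs y m r m) c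
      + \<beta> y * d_action (ps n y) m (Suc r) (d_coeffs y m r m) c"
    using assms by (simp add: d_coeffs_ddu d_action_def)
qed

(* The action of d on coefficient vectors satisfies relations A and B; this is what makes the
   normal-form map vanish on the ideal. *)
lemma d_action_relA:
  assumes g: "\<And>c. g c \<noteq> 0 \<Longrightarrow> c \<le> min p q"
  shows "d_action x (p + 2) q g b' =
    \<alpha> (ps n x) * d_action (ps n x) (p + 1) q g b' + \<beta> (ps n x) * d_action (ps n (ps n x)) p q g b'"
proof -
  have expand: "d_action y p' q g b' = (\<Sum>c\<le>min p q. g c * d_coeffs y p' q c b')" if "p \<le> p'" for y p'
    by (rule d_action_eq_sum_le) (use g that in auto)
  have "d_action x (p + 2) q g b'
      = (\<Sum>c\<le>min p q. g c * (\<alpha> (ps n x) * d_coeffs (ps n x) (p + 1) q c b'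
          + \<beta> (ps n x) * d_coeffs (ps n (ps n x)) p q c b'))"
    unfolding expand[OF le_add1] by (rule sum.cong) (auto simp: d_coeffs_duu)
  also have "\<dots> = \<alpha> (ps n x) * d_action (ps n x) (p + 1) q g b' + \<beta> (ps n x) * d_action (ps n (ps n x)) p q g b'"
    by (simp add: expand sum_distrib_left sum.distrib algebra_simps)
  finally show ?thesis .
qed

lemma d_action_relB_top:
  assumes "p \<le> q"
  shows "d_action x (p + 1) (q + 1) (d_action (pm n x) (p + 1) q (unit_coeffs p)) b' =
    \<alpha> x * d_action x (p + 1) (q + 1) (d_action x p q (unit_coeffs p)) b'
    + \<beta> x * d_action (ps n x) p (q + 1) (d_action x p q (unit_coeffs p)) b'"
proof -
  have "d_action x (p + 1) (q + 1) (d_action (pm n x) (p + 1) q (unit_coeffs p)) b'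
      = d_coeffs x (p + 1) (q + 1) (p + 1) b'"
    using assms by (simp add: d_action_unit d_coeffs_du)
  also have "\<dots> = \<alpha> x * (\<Sum>c\<le>min p (q + 1). d_coeffs x p q p c * d_coeffs x (p + 1) (q + 1) c b')
      + \<beta> x * (\<Sum>c\<le>min p (q + 1). d_coeffs x p q p c * d_coeffs (ps n x) p (q + 1) c b')"
    using assms d_coeffs_ddu[of "p + 1" "q + 1" x b'] by (simp add: lessThan_Suc_atMost)
  also have "\<dots> = \<alpha> x * d_action x (p + 1) (q + 1) (d_action x p q (unit_coeffs p)) b'
      + \<beta> x * d_action (ps n x) p (q + 1) (d_action x p q (unit_coeffs p)) b'"
  proof -
    have "d_action y p' (q + 1) (d_coeffs x p q p) b'
        = (\<Sum>c\<le>min p (q + 1). d_coeffs x p q p c * d_coeffs y p' (q + 1) c b')"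
      if "p \<le> p'" for y p'
      by (rule d_action_eq_sum_le) (use that in \<open>auto dest: d_coeffs_le\<close>)
    then show ?thesis
      using assms by (simp add: d_action_unit)
  qed
  finally show ?thesis .
qed

lemma d_action_relB_unit:
  assumes "x < n" "b \<le> min p q"
  shows "d_action x (p + 1) (q + 1) (d_action (pm n x) (p + 1) q (unit_coeffs b)) b' =
    \<alpha> x * d_action x (p + 1) (q + 1) (d_action x p q (unit_coeffs b)) b'
    + \<beta> x * d_action (ps n x) p (q + 1) (d_action x p q (unit_coeffs b)) b'"
  using assms
proof (induction p arbitrary: x q b b')
  case 0
  then show ?case
    using d_action_relB_top[of 0 q x b'] by simp
next
  case (Suc p)
  show ?case
  proof (cases "b = Suc p")
    case True
    then show ?thesis
      using d_action_relB_top[of "Suc p" q x b'] Suc.prems by simp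
  next
    case False
    have x: "x < n" and b: "b \<le> min p q"
      using False Suc.prems by auto
    have unit_le: "\<And>c. unit_coeffs b c \<noteq> 0 \<Longrightarrow> c \<le> min p q"
      using b by (simp add: unit_coeffs_def split: if_splits)
    have inner: "d_action (pm n x) (Suc p + 1) q (unit_coeffs b)
        = (\<lambda>c. \<alpha> x * d_coeffs x (Suc p) q b c + \<beta> x * d_coeffs (ps n x) p q b c)"
    proof
      fix c
      show "d_action (pm n x) (Suc p + 1) q (unit_coeffs b) c
          = \<alpha> x * d_coeffs x (Suc p) q b c + \<beta> x * d_coeffs (ps n x) p q b c"
        using d_action_relA[of "unit_coeffs b" p q "pm n x" c, OF unit_le] x b
        by (simp add: d_action_unit)
    qed
    have shift: "d_action x (p + 2) (q + 1) (d_coeffs (ps n x) p q b) b'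
        = d_action (ps n x) (Suc p) (q + 1) (d_coeffs x (Suc p) q b) b'"
    proof -
      have "d_action x (p + 2) (q + 1) (d_coeffs (ps n x) p q b) b'
          = \<alpha> (ps n x) * d_action (ps n x) (p + 1) (q + 1) (d_coeffs (ps n x) p q b) b'
            + \<beta> (ps n x) * d_action (ps n (ps n x)) p (q + 1) (d_coeffs (ps n x) p q b) b'"
        by (rule d_action_relA) (auto dest: d_coeffs_le)
      moreover have "d_action (ps n x) (p + 1) (q + 1) (d_action (pm n (ps n x)) (p + 1) q (unit_coeffs b)) b'
          = \<alpha> (ps n x) * d_action (ps n x) (p + 1) (q + 1) (d_action (ps n x) p q (unit_coeffs b)) b'
            + \<beta> (ps n x) * d_action (ps n (ps n x)) p (q + 1) (d_action (ps n x) p q (unit_coeffs b)) b'"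
        using Suc.IH[of "ps n x" b q b'] b by simp
      ultimately show ?thesis
        using x b by (simp add: d_action_unit)
    qed
    have "d_action x (Suc p + 1) (q + 1) (d_action (pm n x) (Suc p + 1) q (unit_coeffs b)) b'
        = \<alpha> x * d_action x (Suc p + 1) (q + 1) (d_coeffs x (Suc p) q b) b'
          + \<beta> x * d_action x (p + 2) (q + 1) (d_coeffs (ps n x) p q b) b'"
      unfolding inner by (simp add: d_action_linear)
    then show ?thesis
      using shift x b by (simp add: d_action_unit)
  qed
qed

lemma d_action_relB:
  assumes x: "x < n" and g: "\<And>c. g c \<noteq> 0 \<Longrightarrow> c \<le> min p q"
  shows "d_action x (p + 1) (q + 1) (d_action (pm n x) (p + 1) q g) b' =
    \<alpha> x * d_action x (p + 1) (q + 1) (d_action x p q g) b'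
    + \<beta> x * d_action (ps n x) p (q + 1) (d_action x p q g) b'"
proof -
  have expand: "d_action y p' q' g = (\<lambda>c'. \<Sum>c\<le>min p q. g c * d_action y p' q' (unit_coeffs c) c')"
    if "p \<le> p'" "q \<le> q'" for y p' q'
  proof
    fix c'
    have "d_action y p' q' g c' = (\<Sum>c\<le>min p q. g c * d_coeffs y p' q' c c')"
      by (rule d_action_eq_sum_le) (use g that in auto)
    also have "\<dots> = (\<Sum>c\<le>min p q. g c * d_action y p' q' (unit_coeffs c) c')"
      by (rule sum.cong) (use that in \<open>auto simp: d_action_unit\<close>)
    finally show "d_action y p' q' g c' = (\<Sum>c\<le>min p q. g c * d_action y p' q' (unit_coeffs c) c')" .
  qed
  have "d_action x (p + 1) (q + 1) (d_action (pm n x) (p + 1) q g) b'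
      = (\<Sum>c\<le>min p q. g c * d_action x (p + 1) (q + 1) (d_action (pm n x) (p + 1) q (unit_coeffs c)) b')"
    unfolding expand[OF le_add1 le_refl] by (simp add: d_action_sum)
  also have "\<dots> = (\<Sum>c\<le>min p q. g c * (\<alpha> x * d_action x (p + 1) (q + 1) (d_action x p q (unit_coeffs c)) b'
      + \<beta> x * d_action (ps n x) p (q + 1) (d_action x p q (unit_coeffs c)) b'))"
    by (rule sum.cong[OF refl]) (metis d_action_relB_unit[OF x] atMost_iff)
  also have "\<dots> = \<alpha> x * d_action x (p + 1) (q + 1) (d_action x p q g) b'
      + \<beta> x * d_action (ps n x) p (q + 1) (d_action x p q g) b'"
    unfolding expand[OF le_refl le_refl]
    by (simp add: d_action_sum sum_distrib_left sum.distrib algebra_simps)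
  finally show ?thesis .
qed

lemma nf_coeffs_normal_word: "x < n \<Longrightarrow> nf_coeffs x (normal_word n x a b c) = unit_coeffs b"
proof -
  have d_only: "nf_coeffs x (normal_word n x 0 0 c) = unit_coeffs 0" for x c
    by (induction c arbitrary: x) (simp_all add: normal_word_counts d_action_unit d_coeffs_d)
  have "nf_coeffs x (normal_word n x 0 b c) = unit_coeffs b" if "x < n" for x
    using that by (induction b) (simp_all add: d_only normal_word_counts d_action_unit d_coeffs_du)
  then show "x < n \<Longrightarrow> ?thesis"
    by (induction a arbitrary: x) simp_all
qed

lemma rels_cases:
  assumes "(a, b, ts) \<in> rels n \<alpha> \<beta>"
  obtains i where "i < n" "a = i" "b = ps n i" "ts = snd (snd (relA n \<alpha> \<beta> i))"
    | i where "i < n" "a = ps n i" "b = i" "ts = snd (snd (relB n \<alpha> \<beta> i))"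
  using assms by (auto simp: rels_def relA_def relB_def)

lemma rels_terms:
  assumes "(a, b, ts) \<in> rels n \<alpha> \<beta>"
  shows "a < n" and "b < n" and "length (snd (hd ts)) = 3"
    and "(c, t) \<in> set ts \<Longrightarrow> walk n a t = Some b" and "(c, t) \<in> set ts \<Longrightarrow> length t = 3"
    and "\<exists>p q. \<forall>(c, t) \<in> set ts. count_U t = p \<and> count_D t = q"
  using assms by (cases rule: rels_cases; auto simp: relA_def relB_def)+

lemma nf_coeffs_relation:
  assumes "(a, b, ts) \<in> rels n \<alpha> \<beta>"
  shows "(\<Sum>(c, t)\<leftarrow>ts. c * nf_coeffs a (t @ w) b') = 0"
proof -
  have w: "\<And>c. nf_coeffs y w c \<noteq> 0 \<Longrightarrow> c \<le> min (count_U w) (count_D w)" for y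
    by (rule nf_coeffs_le)
  from assms show ?thesis
  proof (cases rule: rels_cases)
    case (1 i)
    then show ?thesis
      using d_action_relA[OF w, where x = "pm n i" and b' = b'] by (simp add: relA_def)
  next
    case (2 i)
    then show ?thesis
      using d_action_relB[OF 2(1) w, where b' = b'] by (simp add: relB_def)
  qed
qed

lemma nf_coeffs_prefix:
  assumes "walk n x pp = Some a"
    and counts: "\<forall>(c, t) \<in> set ts. count_U t = p \<and> count_D t = q"
    and zero: "\<And>b'. (\<Sum>(c, t)\<leftarrow>ts. c * nf_coeffs a (t @ w) b') = 0"
  shows "(\<Sum>(c, t)\<leftarrow>ts. c * nf_coeffs x (pp @ t @ w) b') = 0"
  using assms(1)
proof (induction pp arbitrary: x b')
  case Nil
  then show ?case
    using zero by simp
next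
  case (Cons e pp)
  show ?case
  proof (cases e)
    case (U i)
    then show ?thesis
      using Cons by (simp split: if_splits)
  next
    case (D i)
    then have "x = ps n i" "i < n" and pp: "walk n i pp = Some a"
      using Cons.prems by (simp_all split: if_splits)
    let ?P = "count_U pp + p + count_U w" and ?Q = "count_D pp + q + count_D w"
    have "(\<Sum>(c, t)\<leftarrow>ts. c * nf_coeffs x ((e # pp) @ t @ w) b')
        = (\<Sum>(c, t)\<leftarrow>ts. c * d_action i ?P ?Q (nf_coeffs i (pp @ t @ w)) b')"
      using counts D \<open>x = ps n i\<close> \<open>i < n\<close>
      by (intro arg_cong[where f = sum_list] map_cong) (auto simp: add.assoc)
    also have "\<dots> = d_action i ?P ?Q (\<lambda>c'. \<Sum>(c, t)\<leftarrow>ts. c * nf_coeffs i (pp @ t @ w) c') b'"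
      by (rule d_action_sum_list[symmetric])
    also have "\<dots> = 0"
      using Cons.IH[OF pp] by (simp add: d_action_def)
    finally show ?thesis .
  qed
qed

section \<open>Reduction modulo the ideal\<close>

definition lmult :: "arr \<Rightarrow> 'k kQ \<Rightarrow> 'k kQ" where
  "lmult a f = (\<lambda>(v, w). if v = src n a \<and> w \<noteq> [] \<and> hd w = a then f (tgt n a, tl w) else 0)"

lemma lmult_add: "lmult a (f + g) = lmult a f + lmult a g"
  and lmult_diff: "lmult a (f - g) = lmult a f - lmult a g"
  and lmult_scale: "lmult a (scaleQ c f) = scaleQ c (lmult a f)"
  and lmult_zero: "lmult a 0 = 0"
  by (auto simp: lmult_def fun_eq_iff scaleQ_apply)

lemma lmult_sum: "lmult a (\<Sum>i\<in>S. f i) = (\<Sum>i\<in>S. lmult a (f i))"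
  by (auto simp: lmult_def fun_eq_iff sum_apply)

lemma lmult_pvec: "lmult a (pvec (tgt n a, w)) = pvec (src n a, a # w)"
  by (auto simp: lmult_def pvec_def fun_eq_iff neq_Nil_conv)

lemma lmult_sandwich: "lmult a (sandwich (tgt n a) p ts q) = sandwich (src n a) (a # p) ts q"
proof -
  have "(\<Sum>(c, t)\<leftarrow>ts. if w = a # p @ t @ q then c else 0) = 0" if "w = [] \<or> hd w \<noteq> a" for w
    using that by (induction ts) auto
  then show ?thesis
    by (auto simp: lmult_def sandwich_def fun_eq_iff neq_Nil_conv case_prod_unfold)
qed

definition ideal_from :: "nat \<Rightarrow> nat \<Rightarrow> 'k kQ set" where
  "ideal_from k i = kQ.span (\<Union>j. ideal_deg n (rels n \<alpha> \<beta>) k i j)"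

lemma lmult_ideal_from:
  assumes a: "arr_ok n a" and f: "f \<in> ideal_from k (tgt n a)"
  shows "lmult a f \<in> ideal_from (Suc k) (src n a)"
  using f unfolding ideal_from_def
proof (induction rule: kQ.span_induct_alt)
  case base
  then show ?case
    using kQ.span_zero lmult_zero by (metis zero_fun_def)
next
  case (step c g h)
  obtain p q a' b' j ts where g: "g = sandwich (tgt n a) p ts q"
    and r: "(a', b', ts) \<in> rels n \<alpha> \<beta>" "is_path n (tgt n a) p a'" "is_path n b' q j"
      "length p + length (snd (hd ts)) + length q = k"
    using step(1) unfolding ideal_deg_def by blast
  have "is_path n (src n a) (a # p) a'"
    using r(2) a by (auto simp: is_path_def walk.simps(2) src_def ps_def split: arr.splits)
  then have "lmult a g \<in> ideal_deg n (rels n \<alpha> \<beta>) (Suc k) (src n a) j"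
    unfolding ideal_deg_def g lmult_sandwich using r by fastforce
  then show ?case
    unfolding lmult_add lmult_scale using step(2)
    by (meson UN_I UNIV_I kQ.span_add kQ.span_base kQ.span_scale)
qed

lemma lmult_U_ideal_from: "x < n \<Longrightarrow> f \<in> ideal_from k (ps n x) \<Longrightarrow> lmult (U x) f \<in> ideal_from (Suc k) x"
  using lmult_ideal_from[of "U x"] by simp

lemma lmult_D_ideal_from: "y < n \<Longrightarrow> f \<in> ideal_from k y \<Longrightarrow> lmult (D y) f \<in> ideal_from (Suc k) (ps n y)"
  using lmult_ideal_from[of "D y"] by simp

definition normal_comb :: "nat \<Rightarrow> nat \<Rightarrow> nat \<Rightarrow> (nat \<Rightarrow> 'k) \<Rightarrow> 'k kQ" where
  "normal_comb x p q g = (\<Sum>c\<le>min p q. scaleQ (g c) (pvec (x, normal_word n x (p - c) c (q - c))))"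

definition normal_form :: "nat \<Rightarrow> arr list \<Rightarrow> 'k kQ" where
  "normal_form x w = normal_comb x (count_U w) (count_D w) (nf_coeffs x w)"

lemma normal_comb_eq_sum_le:
  assumes "\<And>c. g c \<noteq> 0 \<Longrightarrow> c \<le> m" "m \<le> min p q"
  shows "normal_comb x p q g = (\<Sum>c\<le>m. scaleQ (g c) (pvec (x, normal_word n x (p - c) c (q - c))))"
  unfolding normal_comb_def by (rule sum.mono_neutral_right) (use assms in auto)

lemma normal_comb_unit:
  "b \<le> min p q \<Longrightarrow> normal_comb x p q (unit_coeffs b) = pvec (x, normal_word n x (p - b) b (q - b))"
  by (simp add: normal_comb_def unit_coeffs_def if_distrib[of "\<lambda>c. scaleQ c _"] sum.delta
      kQ.scale_zero_left cong: if_cong)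

lemma normal_comb_linear:
  "normal_comb x p q (\<lambda>c. a * g c + b * h c) = scaleQ a (normal_comb x p q g) + scaleQ b (normal_comb x p q h)"
  unfolding normal_comb_def by (simp add: kQ.scale_left_distrib sum.distrib kQ.scale_sum_right)

lemma normal_comb_sum:
  "finite S \<Longrightarrow> normal_comb x p q (\<lambda>c'. \<Sum>c\<in>S. f c * h c c') = (\<Sum>c\<in>S. scaleQ (f c) (normal_comb x p q (h c)))"
  unfolding normal_comb_def by (simp add: kQ.scale_sum_left kQ.scale_sum_right sum.swap[of _ S])

lemma normal_comb_sum_list:
  "normal_comb x p q (\<lambda>b. \<Sum>(c, t)\<leftarrow>ts. c * g t b) = (\<Sum>(c, t)\<leftarrow>ts. scaleQ c (normal_comb x p q (g t)))"
  by (induction ts) (auto simp: normal_comb_def kQ.scale_left_distrib sum.distrib kQ.scale_sum_right)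

lemma normal_comb_apply_not_normal: "w \<notin> normal_words n x \<Longrightarrow> normal_comb x p q g (v, w) = 0"
  by (auto simp: normal_comb_def sum_apply scaleQ_apply pvec_def normal_words_def intro!: sum.neutral)

lemma lmult_U_normal_comb:
  assumes x: "x < n" and g: "\<And>c. g c \<noteq> 0 \<Longrightarrow> c \<le> min p q"
  shows "lmult (U x) (normal_comb (ps n x) p q g) = normal_comb x (Suc p) q g"
proof -
  have "lmult (U x) (normal_comb (ps n x) p q g)
      = (\<Sum>c\<le>min p q. scaleQ (g c) (pvec (x, normal_word n x (Suc p - c) c (q - c))))"
    unfolding normal_comb_def lmult_sum lmult_scale
    using lmult_pvec[of "U x"] x by (intro sum.cong) (auto simp: Suc_diff_le)
  also have "\<dots> = normal_comb x (Suc p) q g"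
    by (rule normal_comb_eq_sum_le[symmetric]) (use g in auto)
  finally show ?thesis .
qed

lemma normal_form_normal_word:
  "x < n \<Longrightarrow> normal_form x (normal_word n x a b c) = pvec (x, normal_word n x a b c)"
  using normal_comb_unit[of b "a + b" "b + c" x]
  by (simp add: normal_form_def normal_word_counts nf_coeffs_normal_word)

lemma sandwich_eq_sum_list: "sandwich i p ts q = (\<Sum>(c, t)\<leftarrow>ts. scaleQ c (pvec (i, p @ t @ q)))"
proof -
  have nil: "sandwich i p [] q = 0"
    by (simp add: sandwich_def fun_eq_iff)
  have cons: "sandwich i p ((c, t) # ts) q = scaleQ c (pvec (i, p @ t @ q)) + sandwich i p ts q" for c t ts
    by (auto simp: sandwich_def fun_eq_iff pvec_def scaleQ_apply)
  show ?thesis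
    by (induction ts) (auto simp: nil cons)
qed

lemma sandwich_in_ideal_from:
  assumes "(a, b, ts) \<in> rels n \<alpha> \<beta>" "walk n b Y = Some j"
  shows "sandwich a [] ts Y \<in> ideal_from (length Y + 3) a"
proof -
  have "is_path n a [] a" "is_path n b Y j"
    using assms rels_terms(1,2)[OF assms(1)] by (auto simp: is_path_def)
  then have "sandwich a [] ts Y \<in> ideal_deg n (rels n \<alpha> \<beta>) (length Y + 3) a j"
    using assms(1) rels_terms(3)[OF assms(1)] unfolding ideal_deg_def by fastforce
  then show ?thesis
    unfolding ideal_from_def by (blast intro: kQ.span_base)
qed

lemma relA_in_ideal_from:
  assumes "i < n" "walk n (ps n i) Y = Some j"
  shows "pvec (i, D (pm n i) # U (pm n i) # U i # Y) - scaleQ (\<alpha> i) (pvec (i, U i # D i # U i # Y))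
    - scaleQ (\<beta> i) (pvec (i, U i # U (ps n i) # D (ps n i) # Y)) \<in> ideal_from (length Y + 3) i"
proof -
  have "relA n \<alpha> \<beta> i \<in> rels n \<alpha> \<beta>"
    using assms(1) by (auto simp: rels_def)
  from sandwich_in_ideal_from[OF this[unfolded relA_def] assms(2)] show ?thesis
    by (simp add: sandwich_eq_sum_list) (simp add: algebra_simps)
qed

lemma relB_in_ideal_from:
  assumes "i < n" "walk n i Y = Some j"
  shows "pvec (ps n i, D i # D (pm n i) # U (pm n i) # Y) - scaleQ (\<alpha> i) (pvec (ps n i, D i # U i # D i # Y))
    - scaleQ (\<beta> i) (pvec (ps n i, U (ps n i) # D (ps n i) # D i # Y)) \<in> ideal_from (length Y + 3) (ps n i)"
proof -
  have "relB n \<alpha> \<beta> i \<in> rels n \<alpha> \<beta>"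
    using assms(1) by (auto simp: rels_def)
  from sandwich_in_ideal_from[OF this[unfolded relB_def] assms(2)] show ?thesis
    by (simp add: sandwich_eq_sum_list) (simp add: algebra_simps)
qed

lemma ideal_from_rewrite:
  assumes "f - scaleQ a f1 - scaleQ b f2 \<in> ideal_from k i"
    and "f1 - g1 \<in> ideal_from k i" "f2 - g2 \<in> ideal_from k i"
  shows "f - (scaleQ a g1 + scaleQ b g2) \<in> ideal_from k i"
proof -
  have "f - (scaleQ a g1 + scaleQ b g2)
      = (f - scaleQ a f1 - scaleQ b f2) + scaleQ a (f1 - g1) + scaleQ b (f2 - g2)"
    by (simp add: kQ.scale_right_diff_distrib algebra_simps)
  then show ?thesis
    using assms unfolding ideal_from_def by (metis kQ.span_add kQ.span_scale)
qed

lemma lmult_U_reduces: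
  assumes "x < n" "\<And>c. g c \<noteq> 0 \<Longrightarrow> c \<le> min p q"
    and "f - normal_comb (ps n x) p q g \<in> ideal_from k (ps n x)"
  shows "lmult (U x) f - normal_comb x (Suc p) q g \<in> ideal_from (Suc k) x"
  using lmult_U_ideal_from[OF assms(1,3)] by (simp add: lmult_diff lmult_U_normal_comb[OF assms(1,2)])

definition d_reduces :: "nat \<Rightarrow> nat \<Rightarrow> nat \<Rightarrow> nat \<Rightarrow> bool" where
  "d_reduces y p q b \<longleftrightarrow>
    pvec (ps n y, D y # normal_word n y (p - b) b (q - b)) - normal_comb (ps n y) p (Suc q) (d_coeffs y p q b)
      \<in> ideal_from (p + q + 1) (ps n y)"

lemma d_reduces_d_action:
  assumes "y < n" "\<And>c. c \<le> min p q \<Longrightarrow> g c \<noteq> 0 \<Longrightarrow> d_reduces y p q c"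
  shows "lmult (D y) (normal_comb y p q g) - normal_comb (ps n y) p (Suc q) (d_action y p q g)
    \<in> ideal_from (p + q + 1) (ps n y)"
proof -
  let ?r = "\<lambda>c. pvec (ps n y, D y # normal_word n y (p - c) c (q - c))
    - normal_comb (ps n y) p (Suc q) (d_coeffs y p q c)"
  have "lmult (D y) (normal_comb y p q g) - normal_comb (ps n y) p (Suc q) (d_action y p q g)
      = (\<Sum>c\<le>min p q. scaleQ (g c) (?r c))"
    using lmult_pvec[of "D y"] assms(1)
    by (simp add: normal_comb_def[of y] lmult_sum lmult_scale d_action_def normal_comb_sum
        sum_subtractf kQ.scale_right_diff_distrib)
  also have "\<dots> \<in> ideal_from (p + q + 1) (ps n y)"
    unfolding ideal_from_def
  proof (rule kQ.span_sum)
    fix c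
    assume "c \<in> {..min p q}"
    then show "scaleQ (g c) (?r c) \<in> kQ.span (\<Union>j. ideal_deg n (rels n \<alpha> \<beta>) (p + q + 1) (ps n y) j)"
      using assms(2) kQ.span_zero
      by (cases "g c = 0") (auto simp: d_reduces_def ideal_from_def intro: kQ.span_scale)
  qed
  finally show ?thesis .
qed

lemma lmult_D_reduces:
  assumes "y < n" "\<And>c. c \<le> min p q \<Longrightarrow> g c \<noteq> 0 \<Longrightarrow> d_reduces y p q c"
    and "f - normal_comb y p q g \<in> ideal_from (p + q) y"
  shows "lmult (D y) f - normal_comb (ps n y) p (Suc q) (d_action y p q g) \<in> ideal_from (p + q + 1) (ps n y)"
proof -
  have "lmult (D y) f - normal_comb (ps n y) p (Suc q) (d_action y p q g)
      = lmult (D y) (f - normal_comb y p q g)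
        + (lmult (D y) (normal_comb y p q g) - normal_comb (ps n y) p (Suc q) (d_action y p q g))"
    by (simp add: lmult_diff)
  also have "\<dots> \<in> ideal_from (p + q + 1) (ps n y)"
    using lmult_D_ideal_from[OF assms(1,3)] d_reduces_d_action[OF assms(1,2)]
    unfolding ideal_from_def by (simp add: kQ.span_add)
  finally show ?thesis .
qed

lemma d_reduces_d: "y < n \<Longrightarrow> d_reduces y 0 q 0"
  by (simp add: d_reduces_def d_coeffs_d normal_comb_unit ideal_from_def kQ.span_zero)

lemma d_reduces_du: "y < n \<Longrightarrow> b \<le> q \<Longrightarrow> d_reduces y (Suc b) q b"
  by (simp add: d_reduces_def d_coeffs_du normal_comb_unit ideal_from_def kQ.span_zero Suc_diff_le)

lemma d_reduces_duu:
  assumes y: "y < n" and b: "b \<le> q"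
    and red1: "d_reduces (ps n y) (a + b + 1) q b" and red2: "d_reduces (ps n (ps n y)) (a + b) q b"
  shows "d_reduces y (a + b + 2) q b"
proof -
  define i where "i = ps n y"
  define Y where "Y = normal_word n (ps n i) a b (q - b)"
  have i: "i < n" "pm n i = y"
    using y by (simp_all add: i_def)
  have len: "length Y + 3 = a + b + 2 + q + 1"
    using b by (simp add: Y_def normal_word_counts)
  have rel: "pvec (i, D y # U y # U i # Y) - scaleQ (\<alpha> i) (pvec (i, U i # D i # U i # Y))
      - scaleQ (\<beta> i) (pvec (i, U i # U (ps n i) # D (ps n i) # Y)) \<in> ideal_from (a + b + 2 + q + 1) i"
    using relA_in_ideal_from[OF i(1)] walk_normal_word[OF n_ge_1, of "ps n i" a b "q - b"]
    unfolding len[symmetric] i(2) Y_def by auto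
  have red1': "pvec (i, U i # D i # U i # Y) - normal_comb i (a + b + 2) (Suc q) (d_coeffs i (a + b + 1) q b)
      \<in> ideal_from (a + b + 2 + q + 1) i"
    using lmult_U_reduces[OF i(1) d_coeffs_le red1[folded i_def, unfolded d_reduces_def]] i(1) lmult_pvec[of "U i"]
    by (simp add: Y_def Suc_diff_le)
  have supp2: "\<And>c. d_coeffs (ps n i) (a + b) q b c \<noteq> 0 \<Longrightarrow> c \<le> min (a + b + 1) (Suc q)"
    using d_coeffs_le by fastforce
  from lmult_U_reduces[OF ps_bound d_coeffs_le red2[folded i_def, unfolded d_reduces_def]]
  have "pvec (ps n i, U (ps n i) # D (ps n i) # Y)
      - normal_comb (ps n i) (a + b + 1) (Suc q) (d_coeffs (ps n i) (a + b) q b) \<in> ideal_from (a + b + q + 2) (ps n i)"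
    using lmult_pvec[of "U (ps n i)"] by (simp add: Y_def)
  from lmult_U_reduces[OF i(1) supp2 this]
  have red2': "pvec (i, U i # U (ps n i) # D (ps n i) # Y)
      - normal_comb i (a + b + 2) (Suc q) (d_coeffs (ps n i) (a + b) q b) \<in> ideal_from (a + b + 2 + q + 1) i"
    using i(1) lmult_pvec[of "U i"] by simp
  have "d_coeffs y (a + b + 2) q b
      = (\<lambda>c. \<alpha> i * d_coeffs i (a + b + 1) q b c + \<beta> i * d_coeffs (ps n i) (a + b) q b c)"
    using b by (simp add: fun_eq_iff d_coeffs_duu i_def)
  then show ?thesis
    using ideal_from_rewrite[OF rel red1' red2'] b
    by (simp add: d_reduces_def normal_comb_linear Y_def i_def numeral_2_eq_2)
qed

lemma d_reduces_ddu:
  assumes y: "y < n" and m: "m \<le> r"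
    and red0: "d_reduces y m r m"
    and red1: "\<And>c. c \<le> m \<Longrightarrow> d_reduces y (Suc m) (Suc r) c"
    and red2: "\<And>c. c \<le> m \<Longrightarrow> d_reduces (ps n y) m (Suc r) c"
  shows "d_reduces y (Suc m) (Suc r) (Suc m)"
proof -
  define L where "L = d_coeffs y m r m"
  define Y where "Y = normal_word n y 0 m (r - m)"
  have L: "\<And>c. L c \<noteq> 0 \<Longrightarrow> c \<le> m"
    using d_coeffs_le m unfolding L_def by fastforce
  have len: "length Y + 3 = Suc m + Suc r + 1"
    using m by (simp add: Y_def normal_word_counts)
  have red0': "pvec (ps n y, D y # Y) - normal_comb (ps n y) m (Suc r) L \<in> ideal_from (m + Suc r) (ps n y)"
    using red0 by (simp add: d_reduces_def L_def Y_def)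
  have rel: "pvec (ps n y, D y # D (pm n y) # U (pm n y) # Y) - scaleQ (\<alpha> y) (pvec (ps n y, D y # U y # D y # Y))
      - scaleQ (\<beta> y) (pvec (ps n y, U (ps n y) # D (ps n y) # D y # Y)) \<in> ideal_from (Suc m + Suc r + 1) (ps n y)"
    using relB_in_ideal_from[OF y] walk_normal_word[OF n_ge_1 y, of 0 m "r - m"]
    unfolding len[symmetric] Y_def by auto
  have L_le: "\<And>c. L c \<noteq> 0 \<Longrightarrow> c \<le> min m (Suc r)"
    using L m by fastforce
  have red1_L: "\<And>c. c \<le> min (Suc m) (Suc r) \<Longrightarrow> L c \<noteq> 0 \<Longrightarrow> d_reduces y (Suc m) (Suc r) c"
    using L red1 by blast
  have red2_L: "\<And>c. c \<le> min m (Suc r) \<Longrightarrow> L c \<noteq> 0 \<Longrightarrow> d_reduces (ps n y) m (Suc r) c"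
    using L red2 by blast
  have dL_le: "\<And>c. d_action (ps n y) m (Suc r) L c \<noteq> 0 \<Longrightarrow> c \<le> min m (Suc (Suc r))"
    using d_action_le by fastforce
  from lmult_U_reduces[OF y L_le red0']
  have "pvec (y, U y # D y # Y) - normal_comb y (Suc m) (Suc r) L \<in> ideal_from (Suc m + Suc r) y"
    using y lmult_pvec[of "U y"] by simp
  from lmult_D_reduces[OF y red1_L this]
  have red1': "pvec (ps n y, D y # U y # D y # Y)
      - normal_comb (ps n y) (Suc m) (Suc (Suc r)) (d_action y (Suc m) (Suc r) L)
      \<in> ideal_from (Suc m + Suc r + 1) (ps n y)"
    using y lmult_pvec[of "D y"] by simp
  from lmult_D_reduces[OF ps_bound red2_L red0']
  have "pvec (ps n (ps n y), D (ps n y) # D y # Y)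
      - normal_comb (ps n (ps n y)) m (Suc (Suc r)) (d_action (ps n y) m (Suc r) L)
      \<in> ideal_from (m + Suc r + 1) (ps n (ps n y))"
    using lmult_pvec[of "D (ps n y)"] by simp
  from lmult_U_reduces[OF ps_bound dL_le this]
  have red2': "pvec (ps n y, U (ps n y) # D (ps n y) # D y # Y)
      - normal_comb (ps n y) (Suc m) (Suc (Suc r)) (d_action (ps n y) m (Suc r) L)
      \<in> ideal_from (Suc m + Suc r + 1) (ps n y)"
    using lmult_pvec[of "U (ps n y)"] by simp
  have word: "normal_word n y (Suc m - Suc m) (Suc m) (Suc r - Suc m) = D (pm n y) # U (pm n y) # Y"
    by (simp add: Y_def)
  show ?thesis
    using ideal_from_rewrite[OF rel red1' red2']
    unfolding d_reduces_def word d_coeffs_ddu_action[OF m] L_def[symmetric] normal_comb_linear .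
qed

lemma d_reduces_all: "y < n \<Longrightarrow> b \<le> min p q \<Longrightarrow> d_reduces y p q b"
proof (induction "p + b" arbitrary: y p q b rule: less_induct)
  case less
  have "b \<le> p"
    using less.prems(2) by simp
  then show ?case
  proof (cases rule: le_gap_cases)
    case 1
    then show ?thesis
      using less.prems by (simp add: d_reduces_d)
  next
    case 2
    then show ?thesis
      using less.prems by (simp add: d_reduces_du)
  next
    case (3 a)
    have "d_reduces (ps n y) (a + b + 1) q b"
      by (rule less.hyps) (use 3 less.prems in simp_all)
    moreover have "d_reduces (ps n (ps n y)) (a + b) q b"
      by (rule less.hyps) (use 3 less.prems in simp_all)
    ultimately show ?thesis
      unfolding 3 using less.prems by (intro d_reduces_duu) simp_all
  next
    case (4 m)
    then obtain r where r: "q = Suc r" "m \<le> r"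
      using less.prems(2) by (cases q) auto
    have "d_reduces y m r m"
      by (rule less.hyps) (use 4 r less.prems in simp_all)
    moreover have "d_reduces y (Suc m) (Suc r) c" if "c \<le> m" for c
      by (rule less.hyps) (use 4 r that less.prems in simp_all)
    moreover have "d_reduces (ps n y) m (Suc r) c" if "c \<le> m" for c
      by (rule less.hyps) (use 4 r that less.prems in simp_all)
    ultimately show ?thesis
      unfolding 4 r using less.prems r by (intro d_reduces_ddu) simp_all
  qed
qed

lemma normal_form_reduces:
  "x < n \<Longrightarrow> walk n x w \<noteq> None \<Longrightarrow> pvec (x, w) - normal_form x w \<in> ideal_from (length w) x"
proof (induction w arbitrary: x)
  case Nil
  have "pvec (x, []) - normal_form x [] = 0"
    by (simp add: normal_form_def normal_comb_unit)
  then show ?case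
    unfolding ideal_from_def by (simp only: kQ.span_zero)
next
  case (Cons e w)
  show ?case
  proof (cases e)
    case (U i)
    then have e: "e = U x" and w: "walk n (ps n x) w \<noteq> None"
      using Cons.prems by (auto split: if_splits)
    have "lmult (U x) (pvec (ps n x, w)) - normal_comb x (Suc (count_U w)) (count_D w) (nf_coeffs (ps n x) w)
        \<in> ideal_from (Suc (length w)) x"
      by (rule lmult_U_reduces[OF Cons.prems(1) nf_coeffs_le Cons.IH[OF ps_bound w, unfolded normal_form_def]])
    moreover have "lmult (U x) (pvec (ps n x, w)) = pvec (x, e # w)"
      using lmult_pvec[of "U x"] e Cons.prems(1) by simp
    ultimately show ?thesis
      using e by (simp only: normal_form_def nf_coeffs.simps count_U_simps count_D_simps length_Cons)
  next
    case (D i)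
    then have e: "e = D i" "x = ps n i" and i: "i < n" and w: "walk n i w \<noteq> None"
      using Cons.prems by (auto split: if_splits)
    have "pvec (i, w) - normal_comb i (count_U w) (count_D w) (nf_coeffs i w) \<in> ideal_from (count_U w + count_D w) i"
      using Cons.IH[OF i w] unfolding normal_form_def length_eq_count_U_D .
    then have "lmult (D i) (pvec (i, w))
        - normal_comb (ps n i) (count_U w) (Suc (count_D w)) (d_action i (count_U w) (count_D w) (nf_coeffs i w))
        \<in> ideal_from (count_U w + count_D w + 1) (ps n i)"
      using d_reduces_all[OF i] by (intro lmult_D_reduces[OF i])
    moreover have "lmult (D i) (pvec (i, w)) = pvec (x, e # w)"
      using lmult_pvec[of "D i"] e i by simp
    ultimately show ?thesis
      using e i by (simp only: normal_form_def nf_coeffs.simps pm_ps count_U_simps count_D_simps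
          length_Cons length_eq_count_U_D Suc_eq_plus1 add.assoc)
  qed
qed

section \<open>Dimension of the graded pieces\<close>

lemma normal_form_sandwich:
  assumes r: "(a, b, ts) \<in> rels n \<alpha> \<beta>" and pp: "walk n x pp = Some a"
  shows "(\<Sum>(c, t)\<leftarrow>ts. scaleQ c (normal_form x (pp @ t @ w))) = 0"
proof -
  obtain p q where counts: "\<forall>(c, t) \<in> set ts. count_U t = p \<and> count_D t = q"
    using rels_terms(6)[OF r] by blast
  let ?P = "count_U pp + p + count_U w" and ?Q = "count_D pp + q + count_D w"
  have "(\<Sum>(c, t)\<leftarrow>ts. scaleQ c (normal_form x (pp @ t @ w)))
      = (\<Sum>(c, t)\<leftarrow>ts. scaleQ c (normal_comb x ?P ?Q (nf_coeffs x (pp @ t @ w))))"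
    using counts by (intro arg_cong[where f = sum_list] map_cong) (auto simp: normal_form_def add.assoc)
  also have "\<dots> = normal_comb x ?P ?Q (\<lambda>b'. \<Sum>(c, t)\<leftarrow>ts. c * nf_coeffs x (pp @ t @ w) b')"
    by (rule normal_comb_sum_list[symmetric])
  also have "\<dots> = 0"
    using nf_coeffs_prefix[OF pp counts nf_coeffs_relation[OF r]]
    by (simp add: normal_comb_def kQ.scale_zero_left)
  finally show ?thesis .
qed

(* ideal_from mixes all end vertices; restricting to paths ending at j projects back onto e_i I e_j. *)
definition restrict_end :: "nat \<Rightarrow> 'k kQ \<Rightarrow> 'k kQ" where
  "restrict_end j f = (\<lambda>(v, w). if walk n v w = Some j then f (v, w) else 0)"

lemma restrict_end_add: "restrict_end j (f + g) = restrict_end j f + restrict_end j g"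
  and restrict_end_scale: "restrict_end j (scaleQ c f) = scaleQ c (restrict_end j f)"
  by (auto simp: restrict_end_def fun_eq_iff scaleQ_apply)

lemma restrict_end_ideal_deg:
  assumes "g \<in> ideal_deg n (rels n \<alpha> \<beta>) k i j'"
  shows "restrict_end j g = (if j' = j then g else 0)"
proof -
  obtain pp qq a b ts where g: "g = sandwich i pp ts qq" and r: "(a, b, ts) \<in> rels n \<alpha> \<beta>"
    and "walk n i pp = Some a" "walk n b qq = Some j'"
    using assms unfolding ideal_deg_def is_path_def by blast
  then have "walk n i (pp @ t @ qq) = Some j'" if "(c, t) \<in> set ts" for c t
    using rels_terms(4)[OF r that] by (simp add: walk_append)
  moreover have "\<exists>c t. (c, t) \<in> set ts \<and> v = i \<and> w = pp @ t @ qq" if "g (v, w) \<noteq> 0" for v w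
    using that unfolding g by (induction ts) (auto simp: sandwich_def split: if_splits)
  ultimately have "walk n v w = Some j'" if "g (v, w) \<noteq> 0" for v w
    using that by blast
  then have "restrict_end j g (v, w) = (if j' = j then g else 0) (v, w)" for v w
    by (cases "g (v, w) = 0") (auto simp: restrict_end_def)
  then show ?thesis
    by (intro ext) (metis prod.collapse)
qed

lemma restrict_end_ideal_from:
  assumes "f \<in> ideal_from k i"
  shows "restrict_end j f \<in> kQ.span (ideal_deg n (rels n \<alpha> \<beta>) k i j)"
  using assms unfolding ideal_from_def
proof (induction rule: kQ.span_induct_alt)
  case base
  have "restrict_end j 0 = 0"
    by (simp add: restrict_end_def fun_eq_iff)
  then show ?case
    using kQ.span_zero by (metis zero_fun_def)
next
  case (step c g h)
  then obtain j' where "g \<in> ideal_deg n (rels n \<alpha> \<beta>) k i j'"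
    by blast
  then have "restrict_end j g \<in> kQ.span (ideal_deg n (rels n \<alpha> \<beta>) k i j)"
    by (auto simp: restrict_end_ideal_deg kQ.span_zero intro: kQ.span_base)
  then show ?case
    unfolding restrict_end_add restrict_end_scale using step(2) by (metis kQ.span_add kQ.span_scale)
qed


definition nf_residue :: "nat \<Rightarrow> nat \<Rightarrow> arr list \<Rightarrow> 'k kQ" where
  "nf_residue j i w = restrict_end j (pvec (i, w) - normal_form i w)"

lemma nf_residue_apply:
  "w \<notin> normal_words n i \<Longrightarrow> nf_residue j i w' (i, w) = (if w' = w \<and> walk n i w = Some j then 1 else 0)"
  by (auto simp: nf_residue_def restrict_end_def normal_form_def normal_comb_apply_not_normal pvec_def)

lemma nf_residue_normal: "i < n \<Longrightarrow> w \<in> normal_words n i \<Longrightarrow> nf_residue j i w = 0"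
  by (auto simp: nf_residue_def normal_words_def normal_form_normal_word restrict_end_def fun_eq_iff)

lemma restrict_end_sum_list:
  "restrict_end j (\<Sum>(c, t)\<leftarrow>ts. scaleQ c (f t)) = (\<Sum>(c, t)\<leftarrow>ts. scaleQ c (restrict_end j (f t)))"
proof (induction ts)
  case Nil
  then show ?case
    by (simp add: restrict_end_def fun_eq_iff)
qed (auto simp: restrict_end_add restrict_end_scale simp del: plus_fun_apply)

lemma residue_in_span_ideal_deg:
  assumes "i < n" "walk n i w = Some j"
  shows "nf_residue j i w \<in> kQ.span (ideal_deg n (rels n \<alpha> \<beta>) (length w) i j)"
  unfolding nf_residue_def using assms by (intro restrict_end_ideal_from normal_form_reduces) auto

lemma ideal_deg_in_span_residues:
  assumes i: "i < n" and g: "g \<in> ideal_deg n (rels n \<alpha> \<beta>) k i j"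
  shows "g \<in> kQ.span (nf_residue j i ` ({w. is_path n i w j \<and> length w = k} - normal_words n i))"
proof -
  obtain pp qq a b ts where g_eq: "g = sandwich i pp ts qq" and r: "(a, b, ts) \<in> rels n \<alpha> \<beta>"
    and pp: "walk n i pp = Some a" and qq: "walk n b qq = Some j"
    and len: "length pp + length (snd (hd ts)) + length qq = k"
    using g unfolding ideal_deg_def is_path_def by blast
  have "g = (\<Sum>(c, t)\<leftarrow>ts. scaleQ c (pvec (i, pp @ t @ qq) - normal_form i (pp @ t @ qq)))"
    using normal_form_sandwich[OF r pp] by (simp add: g_eq sandwich_eq_sum_list sum_list_scaleQ_diff)
  then have "g = (\<Sum>(c, t)\<leftarrow>ts. scaleQ c (nf_residue j i (pp @ t @ qq)))"
    using restrict_end_ideal_deg[OF g, of j] by (simp add: restrict_end_sum_list nf_residue_def)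
  also have "\<dots> \<in> kQ.span (nf_residue j i ` ({w. is_path n i w j \<and> length w = k} - normal_words n i))"
  proof (rule sum_list_scaleQ_in_span)
    fix c t
    assume t: "(c, t) \<in> set ts"
    have "walk n i (pp @ t @ qq) = Some j" "length (pp @ t @ qq) = k"
      using len rels_terms(3,4,5)[OF r] t pp qq by (auto simp: walk_append)
    then show "nf_residue j i (pp @ t @ qq)
        \<in> kQ.span (nf_residue j i ` ({w. is_path n i w j \<and> length w = k} - normal_words n i))"
      using i nf_residue_normal[OF i] by (cases "pp @ t @ qq \<in> normal_words n i")
        (auto simp: is_path_def kQ.span_zero intro: kQ.span_base)
  qed
  finally show ?thesis .
qed

lemma span_ideal_deg_eq_span_residues:
  assumes i: "i < n"
  shows "kQ.span (ideal_deg n (rels n \<alpha> \<beta>) k i j)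
    = kQ.span (nf_residue j i ` ({w. is_path n i w j \<and> length w = k} - normal_words n i))"
  using residue_in_span_ideal_deg[OF i] ideal_deg_in_span_residues[OF i]
  by (intro kQ.span_eq[THEN iffD2]) (auto simp: is_path_def)

lemma dim_span_residues:
  fixes i j k :: nat
  defines "R \<equiv> {w. is_path n i w j \<and> length w = k} - normal_words n i"
  shows "kQ.dim (kQ.span (nf_residue j i ` R)) = card R"
proof -
  have residue_self: "nf_residue j i w (i, w) = 1" if "w \<in> R" for w
    using that by (simp add: R_def nf_residue_apply is_path_def)
  have residue_other: "nf_residue j i w' (i, w) = 0" if "w \<in> R" "w' \<noteq> w" for w w'
    using that by (simp add: R_def nf_residue_apply)
  have "kQ.independent (nf_residue j i ` R)"
  proof (rule kQ_independent_diagonal)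
    fix f
    assume "f \<in> nf_residue j i ` R"
    then obtain w where w: "w \<in> R" and f: "f = nf_residue j i w"
      by blast
    have "g (i, w) = 0" if g_in: "g \<in> nf_residue j i ` R" and g_ne: "g \<noteq> f" for g
    proof -
      obtain w' where g: "g = nf_residue j i w'"
        using g_in by blast
      then have "w' \<noteq> w"
        using g_ne f by blast
      then show ?thesis
        using residue_other[OF w] g by simp
    qed
    then show "\<exists>z. f z \<noteq> 0 \<and> (\<forall>g \<in> nf_residue j i ` R. g \<noteq> f \<longrightarrow> g z = 0)"
      using residue_self[OF w] f by (intro exI[of _ "(i, w)"]) simp
  qed
  moreover have "inj_on (nf_residue j i) R"
  proof (rule inj_onI, rule ccontr)
    fix w w'
    assume w: "w \<in> R" and eq: "nf_residue j i w = nf_residue j i w'" and "w \<noteq> w'"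
    then have "nf_residue j i w' (i, w) = 0"
      using residue_other[OF w] by simp
    then show False
      using residue_self[OF w] eq by simp
  qed
  ultimately show ?thesis
    by (simp add: kQ.dim_eq_card_independent card_image)
qed

lemma hilb_entry_eq_card_normal_paths:
  assumes i: "i < n"
  shows "hilb_entry n (rels n \<alpha> \<beta>) k i j = card ({w. is_path n i w j \<and> length w = k} \<inter> normal_words n i)"
proof -
  let ?P = "{w. is_path n i w j \<and> length w = k}" and ?N = "normal_words n i"
  have "dimQ (ideal_deg n (rels n \<alpha> \<beta>) k i j) = card (?P - ?N)"
    unfolding dimQ_eq_dim kQ.dim_span[symmetric, of "ideal_deg _ _ _ _ _"] span_ideal_deg_eq_span_residues[OF i]
    by (rule dim_span_residues)
  moreover have "card (?P - ?N) = card ?P - card (?P \<inter> ?N)"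
    using finite_paths by (intro card_Diff_subset_Int) simp
  moreover have "card (?P \<inter> ?N) \<le> card ?P"
    using finite_paths by (intro card_mono) auto
  ultimately show ?thesis
    by (simp add: hilb_entry_def dim_paths_deg)
qed

end

theorem corollary1p3:
  fixes n :: nat and \<alpha> \<beta> :: "nat \<Rightarrow> 'k::field_char_0"
  assumes "alg_closed TYPE('k)" and "n \<ge> 1"
  shows "hilb_tot n (rels n \<alpha> \<beta>) =
    of_nat n * inverse ((1 - fps_X) ^ 2 * (1 - fps_X ^ 2))"
proof -
  interpret H_relations n \<alpha> \<beta>
    using assms(2) by unfold_locales
  have "(\<Sum>i<n. \<Sum>j<n. hilb_entry n (rels n \<alpha> \<beta>) k i j) = n * num_normal_words k" for k
    using hilb_entry_eq_card_normal_paths card_normal_paths[OF assms(2)] by simp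
  then have "hilb_tot n (rels n \<alpha> \<beta>) = of_nat n * Abs_fps (\<lambda>k. of_nat (num_normal_words k))"
    by (simp add: hilb_tot_def fps_eq_iff fps_of_nat[symmetric] fps_mult_left_const_nth)
  then show ?thesis
    by (simp add: fps_num_normal_words)
qed

end
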